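(* Let $\Bbbk$ be a field, $n\ge2$, $q\in\Bbbk$ a primitive $n$-th root of unity, $T_n(q)$ the Taft algebra and $A$ a unital associative $\Bbbk$-algebra. Let $\cdot:T_n(q)\otimes A\to A$ be a linear map with $1\cdot1_A=1_A$ and $g^i\cdot1_A=0$ for all $1\le i<n$. Then $\cdot$ is a partial action of $T_n(q)$ on $A$ if and only if $(x\cdot1_A)^n\in Z(A)$ and $$g^{n-i}x^j\cdot a=(-1)^iq^{\frac{i(i+1)}{2}}\binom{j}{i}_q(x\cdot1_A)^{j-i}a(x\cdot1_A)^i$$ for all $a\in A$ and $0\le i,j<n$.
   Context: The Taft algebra $T_n(q)$ is the Hopf algebra generated by $g,x$ with relations $g^n=1$, $x^n=0$, $xg=qgx$ (so $g^n=1$), basis $\{g^ix^j:0\le i,j<n\}$, $g$ group-like, $\Delta(x)=x\otimes1+g\otimes x$, $\varepsilon(x)=0$. $Z(A)$ is the center of $A$. A partial action of a bialgebra $H$ on $A$ is a linear map $\cdot:H\otimes A\to A$ with $1_H\cdot a=a$, $h\cdot(ab)=(h_1\cdot a)(h_2\cdot b)$, $h\cdot(k\cdot a)=(h_1\cdot1_A)(h_2k\cdot a)$. $q$-binomials: $\binom{0}{0}_p=1$, $\binom{N}{m}_p=0$ if $m>N$ or $m<0$, and $\binom{N}{m}_p=\binom{N-1}{m-1}_p+p^m\binom{N-1}{m}_p$ for $N\ge1$, $0\le m\le N$. *)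

theory Defs
  imports Complex_Main
begin

definition prim_root :: "nat \<Rightarrow> 'k::field \<Rightarrow> bool" where
  "prim_root n q \<longleftrightarrow> q ^ n = 1 \<and> (\<forall>m. 0 < m \<and> m < n \<longrightarrow> q ^ m \<noteq> 1)"

text \<open>q-binomial coefficients, by the recursion of the paper (m ranges over naturals;
  the case m < 0 never arises).\<close>
fun qbinom :: "'k::comm_ring_1 \<Rightarrow> nat \<Rightarrow> nat \<Rightarrow> 'k" where
  "qbinom p 0 m = (if m = 0 then 1 else 0)"
| "qbinom p (Suc N) m =
     (if m > Suc N then 0
      else (if m = 0 then 0 else qbinom p N (m - 1)) + p ^ m * qbinom p N m)"

text \<open>Unital associative k-algebra structure on a ring 'a, given by a scalar multiplication.\<close>
definition k_algebra :: "('k::field \<Rightarrow> 'a::ring_1 \<Rightarrow> 'a) \<Rightarrow> bool" where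
  "k_algebra scale \<longleftrightarrow> Vector_Spaces.vector_space scale \<and>
     (\<forall>c a b. scale c (a * b) = scale c a * b \<and> scale c (a * b) = a * scale c b)"

definition center :: "'a::ring_1 set" where
  "center = {z. \<forall>a. z * a = a * z}"

text \<open>The Taft algebra T_n(q): an element is its coefficient function w.r.t. the basis
  g^i x^j (0 <= i,j < n), a pair (i,j) standing for g^i x^j.\<close>
type_synonym 'k taft = "nat \<times> nat \<Rightarrow> 'k"
type_synonym 'k taft2 = "(nat \<times> nat) \<times> (nat \<times> nat) \<Rightarrow> 'k"

definition idx :: "nat \<Rightarrow> (nat \<times> nat) set" where
  "idx n = {..<n} \<times> {..<n}"

definition taft_elem :: "nat \<Rightarrow> 'k::field taft \<Rightarrow> bool" where
  "taft_elem n h \<longleftrightarrow> (\<forall>p. p \<notin> idx n \<longrightarrow> h p = 0)"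

text \<open>basis element g^i x^j (g^n = 1, x^n = 0)\<close>
definition taft_basis :: "nat \<Rightarrow> nat \<Rightarrow> nat \<Rightarrow> 'k::field taft" where
  "taft_basis n i j = (\<lambda>p. if p = (i mod n, j) \<and> j < n then 1 else 0)"

text \<open>structure constants: (g^i x^j)(g^k x^l) = q^(jk) g^(i+k) x^(j+l), using x g = q g x\<close>
definition taft_sc :: "nat \<Rightarrow> 'k::field \<Rightarrow> nat \<times> nat \<Rightarrow> nat \<times> nat \<Rightarrow> nat \<times> nat \<Rightarrow> 'k" where
  "taft_sc n q u v w =
     (if (fst u + fst v) mod n = fst w \<and> snd u + snd v = snd w \<and> snd w < n
      then q ^ (snd u * fst v) else 0)"

definition taft_mul :: "nat \<Rightarrow> 'k::field \<Rightarrow> 'k taft \<Rightarrow> 'k taft \<Rightarrow> 'k taft" where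
  "taft_mul n q h k = (\<lambda>w. \<Sum>u\<in>idx n. \<Sum>v\<in>idx n. h u * k v * taft_sc n q u v w)"

text \<open>T_n(q) \<otimes> T_n(q) with componentwise multiplication\<close>
definition tt_mul :: "nat \<Rightarrow> 'k::field \<Rightarrow> 'k taft2 \<Rightarrow> 'k taft2 \<Rightarrow> 'k taft2" where
  "tt_mul n q F G = (\<lambda>w. \<Sum>u\<in>idx n. \<Sum>u'\<in>idx n. \<Sum>v\<in>idx n. \<Sum>v'\<in>idx n.
      F (u, v) * G (u', v') * taft_sc n q u u' (fst w) * taft_sc n q v v' (snd w))"

definition tt_basis :: "nat \<times> nat \<Rightarrow> nat \<times> nat \<Rightarrow> 'k::field taft2" where
  "tt_basis u v = (\<lambda>w. if w = (u, v) then 1 else 0)"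

definition tt_pow :: "nat \<Rightarrow> 'k::field \<Rightarrow> 'k taft2 \<Rightarrow> nat \<Rightarrow> 'k taft2" where
  "tt_pow n q F m = (tt_mul n q F ^^ m) (tt_basis (0,0) (0,0))"

text \<open>Comultiplication: the algebra map with \<Delta>(g) = g \<otimes> g and \<Delta>(x) = x \<otimes> 1 + g \<otimes> x,
  so \<Delta>(g^i x^j) = \<Delta>(g)^i \<Delta>(x)^j; extended linearly.\<close>
definition taft_comult_basis :: "nat \<Rightarrow> 'k::field \<Rightarrow> nat \<Rightarrow> nat \<Rightarrow> 'k taft2" where
  "taft_comult_basis n q i j =
     tt_mul n q (tt_pow n q (tt_basis (1,0) (1,0)) i)
       (tt_pow n q (\<lambda>w. tt_basis (0,1) (0,0) w + tt_basis (1,0) (0,1) w) j)"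

definition taft_comult :: "nat \<Rightarrow> 'k::field \<Rightarrow> 'k taft \<Rightarrow> 'k taft2" where
  "taft_comult n q h = (\<lambda>w. \<Sum>u\<in>idx n. h u * taft_comult_basis n q (fst u) (snd u) w)"

text \<open>A linear map T_n(q) \<otimes> A \<rightarrow> A is given by act i j a = (g^i x^j) \<cdot> a, each act i j
  linear; its value on h \<otimes> a is act_lin.\<close>
definition act_lin :: "('k::field \<Rightarrow> 'a::ring_1 \<Rightarrow> 'a) \<Rightarrow> (nat \<Rightarrow> nat \<Rightarrow> 'a \<Rightarrow> 'a)
    \<Rightarrow> nat \<Rightarrow> 'k taft \<Rightarrow> 'a \<Rightarrow> 'a" where
  "act_lin scale act n h a = (\<Sum>u\<in>idx n. scale (h u) (act (fst u) (snd u) a))"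

definition partial_action :: "nat \<Rightarrow> 'k::field \<Rightarrow> ('k \<Rightarrow> 'a::ring_1 \<Rightarrow> 'a)
    \<Rightarrow> (nat \<Rightarrow> nat \<Rightarrow> 'a \<Rightarrow> 'a) \<Rightarrow> bool" where
  "partial_action n q scale act \<longleftrightarrow>
     (\<forall>a. act_lin scale act n (taft_basis n 0 0) a = a) \<and>
     (\<forall>h a b. taft_elem n h \<longrightarrow>
        act_lin scale act n h (a * b) =
          (\<Sum>u\<in>idx n. \<Sum>v\<in>idx n. scale (taft_comult n q h (u, v))
              (act (fst u) (snd u) a * act (fst v) (snd v) b))) \<and>
     (\<forall>h k a. taft_elem n h \<longrightarrow> taft_elem n k \<longrightarrow>
        act_lin scale act n h (act_lin scale act n k a) =
          (\<Sum>u\<in>idx n. \<Sum>v\<in>idx n. scale (taft_comult n q h (u, v))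
              (act (fst u) (snd u) 1 *
               act_lin scale act n (taft_mul n q (taft_basis n (fst v) (snd v)) k) a)))"

end

theory Submission
  imports Defs
begin

text \<open>
  Write x1 = x.1 and gx_act b m a = g^b x^m . a for all b and m (so g^n = 1 and x^n = 0).
  Because Delta(g^i x^j) = sum_l [j, l]_q g^(i+l) x^(j-l) (x) g^i x^l, a linear map is a
  partial action iff the product and composition axioms hold on basis elements.
  For h = g^b and k = 1 the composition axiom gives g^b . a = (g^b . 1)(g^b . a), so
  gx_act b 0 a is a or 0 according as n divides b or not. For h = g^(n-1) x the product
  axiom gives g^(n-1) x . X = X (g^(n-1) x . 1), the composition axiom gives
  g^(n-1) x . 1 = -q x1, and then the composition axiom turns into the recursion
  q^b gx_act b (m+1) a = x1 gx_act b m a - gx_act (b+1) m a x1.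
  Initial values and recursion determine gx_act b m a for m < n, and the closed formula
  solves the recursion below the top degree; at m + 1 = n, where x^n = 0, the recursion
  says exactly that x1^n is central. Conversely, the recursion is preserved by the
  q-binomial products occurring in the two axioms (a q-Leibniz rule, proved with the
  q-Pascal identity), which yields the axioms on basis elements.
\<close>

section \<open>q-binomial coefficients at a root of unity\<close>

lemma qbinom_eq_0_if_less: "N < m \<Longrightarrow> qbinom p N m = 0"
  by (cases N) auto

lemma qbinom_0_right [simp]: "qbinom p N 0 = 1"
  by (induction N) auto

lemma qbinom_Suc_Suc:
  "qbinom p (Suc N) (Suc m) = qbinom p N m + p ^ Suc m * qbinom p N (Suc m)"
  by (auto simp: qbinom_eq_0_if_less)

lemma qbinom_self [simp]: "qbinom p N N = 1"
  by (induction N) (auto simp: qbinom_eq_0_if_less)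

declare qbinom.simps [simp del]

lemma qbinom_mult_prod:
  "qbinom p N r * (\<Prod>t\<in>{1..r}. 1 - p ^ t) = (\<Prod>t<r. 1 - p ^ (N - t))"
proof (induction N arbitrary: r)
  case 0
  then show ?case
    by (cases r) (auto simp: qbinom.simps prod.lessThan_Suc_shift)
next
  case (Suc N)
  show ?case
  proof (cases r)
    case 0
    then show ?thesis by simp
  next
    case (Suc s)
    define P where "P = (\<Prod>t<s. 1 - p ^ (N - t))"
    have shift: "(\<Prod>t<Suc s. 1 - p ^ (Suc N - t)) = (1 - p ^ Suc N) * P"
      unfolding P_def by (subst prod.lessThan_Suc_shift) simp
    have telescope: "P * (1 - p ^ (N - s)) * p ^ Suc s = P * (p ^ Suc s - p ^ Suc N)"
    proof (cases "s \<le> N")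
      case True
      then have "p ^ (N - s) * p ^ Suc s = p ^ Suc N"
        by (simp only: power_add[symmetric]) simp
      then show ?thesis by (simp add: algebra_simps)
    next
      case False
      then have "P = 0"
        unfolding P_def by (intro prod_zero) (auto intro!: bexI[of _ N])
      then show ?thesis by simp
    qed
    have "qbinom p (Suc N) r * (\<Prod>t\<in>{1..r}. 1 - p ^ t)
        = (qbinom p N s * (\<Prod>t\<in>{1..s}. 1 - p ^ t)) * (1 - p ^ Suc s)
          + p ^ Suc s * (qbinom p N (Suc s) * ((\<Prod>t\<in>{1..s}. 1 - p ^ t) * (1 - p ^ Suc s)))"
      using Suc by (simp add: qbinom_Suc_Suc algebra_simps)
    also have "\<dots> = P * (1 - p ^ Suc s) + p ^ Suc s * (P * (1 - p ^ (N - s)))"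
      using Suc.IH[of s] Suc.IH[of "Suc s"] by (simp add: P_def)
    also have "\<dots> = (1 - p ^ Suc N) * P"
      using telescope by (simp add: algebra_simps)
    finally show ?thesis
      using Suc shift by simp
  qed
qed

lemma prim_root_power_mod:
  assumes "prim_root n q"
  shows "q ^ k = q ^ (k mod n)"
proof -
  have "q ^ k = (q ^ n) ^ (k div n) * q ^ (k mod n)"
    by (simp flip: power_mult power_add)
  then show ?thesis
    using assms by (simp add: prim_root_def)
qed

lemma prim_root_nonzero: "prim_root n q \<Longrightarrow> 0 < n \<Longrightarrow> q \<noteq> 0"
  by (auto simp: prim_root_def power_0_left)

lemma qbinom_prim_root_eq_0:
  assumes "prim_root n q" "0 < r" "r < n"
  shows "qbinom q n r = 0"
proof -
  have "(\<Prod>t<r. 1 - q ^ (n - t)) = 0"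
    using assms by (intro prod_zero) (auto simp: prim_root_def intro!: bexI[of _ 0])
  moreover have "(\<Prod>t\<in>{1..r}. 1 - q ^ t) \<noteq> 0"
    using assms by (auto simp: prim_root_def)
  ultimately show ?thesis
    using qbinom_mult_prod[of q n r] by (metis mult_eq_0_iff)
qed

lemma triangle_Suc: "Suc s * (Suc s + 1) div 2 = s * (s + 1) div 2 + Suc s"
proof -
  have "Suc s * (Suc s + 1) = s * (s + 1) + 2 * Suc s"
    by (simp add: algebra_simps)
  then show ?thesis by simp
qed

lemma prim_root_sign_triangle:
  fixes q :: "'k::field"
  assumes "prim_root n q" "2 \<le> n"
  shows "(-1) ^ (n - 1) * q ^ ((n - 1) * (n - 1 + 1) div 2) = 1"
proof (cases "even n")
  case True
  then obtain k where k: "n = 2 * k" by blast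
  with assms have k_pos: "1 \<le> k" "k < n" by auto
  then have "q ^ k \<noteq> 1"
    using assms by (simp add: prim_root_def)
  moreover have "(q ^ k)\<^sup>2 = 1"
    using assms k by (simp add: prim_root_def mult.commute flip: power_mult)
  ultimately have "q ^ k = -1"
    by (metis power2_eq_1_iff)
  moreover have "(n - 1) * (n - 1 + 1) div 2 = k * (n - 1)"
    using k k_pos by (simp add: algebra_simps)
  moreover have "odd (n - 1)"
    using k k_pos by simp
  ultimately show ?thesis
    by (simp only: power_mult) simp
next
  case False
  then obtain k where k: "n = 2 * k + 1" using oddE by blast
  then have exponent: "(n - 1) * (n - 1 + 1) div 2 = n * k"
    by (simp add: algebra_simps)
  have "q ^ (n * k) = 1"
    using assms by (simp add: prim_root_def power_mult)
  moreover have "(-1 :: 'k) ^ (n - 1) = 1"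
    using k by simp
  ultimately show ?thesis by (simp only: exponent) simp
qed

lemma module_mult: "module ((*) :: 'a::comm_ring_1 \<Rightarrow> 'a \<Rightarrow> 'a)"
  by unfold_locales (simp_all add: algebra_simps)

lemma (in module) sum_qbinom_Suc:
  "(\<Sum>l\<le>Suc j. scale (qbinom p (Suc j) l) (F l)) =
     (\<Sum>l\<le>j. scale (qbinom p j l) (F (Suc l))) + (\<Sum>l\<le>j. scale (p ^ l * qbinom p j l) (F l))"
proof -
  have "(\<Sum>l\<le>Suc j. scale (qbinom p (Suc j) l) (F l)) =
      (\<Sum>l\<le>j. scale (qbinom p j l) (F (Suc l)))
      + (F 0 + (\<Sum>l\<le>j. scale (p ^ Suc l * qbinom p j (Suc l)) (F (Suc l))))"
    by (subst sum.atMost_Suc_shift)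
      (simp add: qbinom_Suc_Suc scale_left_distrib sum.distrib algebra_simps)
  also have "F 0 + (\<Sum>l\<le>j. scale (p ^ Suc l * qbinom p j (Suc l)) (F (Suc l)))
      = (\<Sum>l\<le>Suc j. scale (p ^ l * qbinom p j l) (F l))"
    by (simp only: sum.atMost_Suc_shift) simp
  also have "\<dots> = (\<Sum>l\<le>j. scale (p ^ l * qbinom p j l) (F l))"
    by (simp add: qbinom_eq_0_if_less)
  finally show ?thesis .
qed

section \<open>The comultiplication on basis elements\<close>

lemma finite_idx [simp]: "finite (idx n)"
  by (simp add: idx_def)

lemma if_zero_mult: "(if P then x else 0) * (y :: 'a::mult_zero) = (if P then x * y else 0)"
  by simp

lemma sum_product_set: "(\<Sum>p\<in>A \<times> B. f p) = (\<Sum>x\<in>A. \<Sum>y\<in>B. f (x, y))"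
  by (simp add: sum.cartesian_product split_def)

lemma sum_sum_sum_swap:
  "(\<Sum>x\<in>A. \<Sum>y\<in>B. \<Sum>z\<in>C. f x y z) = (\<Sum>y\<in>B. \<Sum>z\<in>C. \<Sum>x\<in>A. f x y z)"
  by (subst sum.swap) (rule sum.cong [OF refl], rule sum.swap)

lemma tt_mul_eq_pair_sum:
  "tt_mul n q F G w = (\<Sum>p'\<in>idx n \<times> idx n. \<Sum>p\<in>idx n \<times> idx n.
     F p * G p' * taft_sc n q (fst p) (fst p') (fst w) * taft_sc n q (snd p) (snd p') (snd w))"
proof -
  have "tt_mul n q F G w = (\<Sum>p\<in>idx n \<times> idx n. \<Sum>p'\<in>idx n \<times> idx n.
     F p * G p' * taft_sc n q (fst p) (fst p') (fst w) * taft_sc n q (snd p) (snd p') (snd w))"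
    unfolding tt_mul_def sum_product_set fst_conv snd_conv
    by (rule sum.cong [OF refl]) (rule sum.swap)
  also have "\<dots> = (\<Sum>p'\<in>idx n \<times> idx n. \<Sum>p\<in>idx n \<times> idx n.
     F p * G p' * taft_sc n q (fst p) (fst p') (fst w) * taft_sc n q (snd p) (snd p') (snd w))"
    by (rule sum.swap)
  finally show ?thesis .
qed

lemma tt_mul_tt_basis:
  assumes "u \<in> idx n" "v \<in> idx n" "u' \<in> idx n" "v' \<in> idx n"
  shows "tt_mul n q (tt_basis u v) (tt_basis u' v') w =
    taft_sc n q u u' (fst w) * taft_sc n q v v' (snd w)"
  using assms by (simp add: tt_mul_eq_pair_sum tt_basis_def if_zero_mult sum.delta)

lemma tt_mul_add_left:
  "tt_mul n q (\<lambda>p. F1 p + F2 p) G w = tt_mul n q F1 G w + tt_mul n q F2 G w"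
  unfolding tt_mul_def by (simp add: algebra_simps sum.distrib)

lemma tt_mul_sum_right:
  "finite T \<Longrightarrow>
    tt_mul n q F (\<lambda>p. \<Sum>t\<in>T. c t * G t p) w = (\<Sum>t\<in>T. c t * tt_mul n q F (G t) w)"
  unfolding tt_mul_def
  by (simp add: sum_distrib_left sum_distrib_right sum.swap [of _ T] algebra_simps)

lemma tt_pow_Suc: "tt_pow n q F (Suc m) = tt_mul n q F (tt_pow n q F m)"
  by (simp add: tt_pow_def)

lemma tt_pow_group_like:
  assumes "2 \<le> n"
  shows "tt_pow n q (tt_basis (1, 0) (1, 0)) i = tt_basis (i mod n, 0) (i mod n, 0)"
proof (induction i)
  case 0
  then show ?case by (simp add: tt_pow_def)
next
  case (Suc i)
  have "Suc (i mod n) mod n = Suc i mod n"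
    by (simp add: mod_Suc_eq)
  then show ?case
    using assms unfolding tt_pow_Suc Suc.IH
    by (intro ext, subst tt_mul_tt_basis) (auto simp: idx_def taft_sc_def tt_basis_def prod_eq_iff)
qed

abbreviation comult_x :: "'k::field taft2" where
  "comult_x \<equiv> \<lambda>w. tt_basis (0, 1) (0, 0) w + tt_basis (1, 0) (0, 1) w"

lemma tt_pow_comult_x:
  fixes q :: "'k::field"
  assumes "2 \<le> n" "j < n"
  shows "tt_pow n q comult_x j = (\<lambda>p. \<Sum>l\<le>j. qbinom q j l * tt_basis (l, j - l) (0, l) p)"
  using assms(2)
proof (induction j)
  case 0
  then show ?case by (simp add: tt_pow_def)
next
  case (Suc j)
  have step: "tt_pow n q comult_x (Suc j) w = (\<Sum>l\<le>j. qbinom q j l *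
      (q ^ l * tt_basis (l, Suc j - l) (0, l) w + tt_basis (Suc l, j - l) (0, Suc l) w))" for w
  proof -
    have "tt_mul n q (tt_basis (0, 1) (0, 0)) (tt_basis (l, j - l) (0, l)) w
        = q ^ l * tt_basis (l, Suc j - l) (0, l) w"
      and "tt_mul n q (tt_basis (1, 0) (0, 1)) (tt_basis (l, j - l) (0, l)) w
        = tt_basis (Suc l, j - l) (0, Suc l) w"
      if "l \<le> j" for l
      using assms Suc.prems that
      by (subst tt_mul_tt_basis; auto simp: idx_def taft_sc_def tt_basis_def prod_eq_iff Suc_diff_le)+
    then show ?thesis
      unfolding tt_pow_Suc Suc.IH [OF Suc_lessD [OF Suc.prems]] tt_mul_add_left
      by (simp add: tt_mul_sum_right sum.distrib algebra_simps)
  qed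
  show ?case
  proof
    fix w
    show "tt_pow n q comult_x (Suc j) w =
        (\<Sum>l\<le>Suc j. qbinom q (Suc j) l * tt_basis (l, Suc j - l) (0, l) w)"
      unfolding step module.sum_qbinom_Suc [OF module_mult]
      by (simp add: sum.distrib algebra_simps)
  qed
qed

lemma taft_comult_basis_eq:
  fixes q :: "'k::field"
  assumes "2 \<le> n" "i < n" "j < n"
  shows "taft_comult_basis n q i j w =
    (\<Sum>l\<le>j. qbinom q j l * tt_basis ((i + l) mod n, j - l) (i, l) w)"
proof -
  have "tt_mul n q (tt_basis (i, 0) (i, 0)) (tt_basis (l, j - l) (0, l)) w
      = tt_basis ((i + l) mod n, j - l) (i, l) w" if "l \<le> j" for l
    using assms that
    by (subst tt_mul_tt_basis) (auto simp: idx_def taft_sc_def tt_basis_def prod_eq_iff)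
  then show ?thesis
    unfolding taft_comult_basis_def tt_pow_group_like [OF assms(1)] tt_pow_comult_x [OF assms(1,3)]
    using assms by (simp add: tt_mul_sum_right)
qed

section \<open>Partial actions on basis elements\<close>

lemma mem_idx_iff: "p \<in> idx n \<longleftrightarrow> fst p < n \<and> snd p < n"
  by (auto simp: idx_def mem_Times_iff)

lemma taft_basis_eq:
  "i < n \<Longrightarrow> j < n \<Longrightarrow> taft_basis n i j = (\<lambda>p. if p = (i, j) then 1 else 0)"
  by (auto simp: taft_basis_def)

lemma taft_elem_taft_basis: "i < n \<Longrightarrow> taft_elem n (taft_basis n i j)"
  by (auto simp: taft_elem_def taft_basis_def idx_def)

lemma taft_comult_taft_basis:
  "i < n \<Longrightarrow> j < n \<Longrightarrow> taft_comult n q (taft_basis n i j) p = taft_comult_basis n q i j p"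
  by (simp add: taft_comult_def taft_basis_eq if_zero_mult sum.delta idx_def)

lemma taft_mul_taft_basis_left:
  assumes "v \<in> idx n"
  shows "taft_mul n q (taft_basis n (fst v) (snd v)) k p = (\<Sum>z\<in>idx n. k z * taft_sc n q v z p)"
proof -
  have basis: "taft_basis n (fst v) (snd v) = (\<lambda>p. if p = v then 1 else 0)"
    using assms by (auto simp: taft_basis_eq idx_def)
  have "taft_mul n q (taft_basis n (fst v) (snd v)) k p =
      (\<Sum>u\<in>idx n. \<Sum>z\<in>idx n. if u = v then k z * taft_sc n q u z p else 0)"
    unfolding taft_mul_def basis by (simp add: if_zero_mult cong: if_cong)
  also have "\<dots> = (\<Sum>z\<in>idx n. \<Sum>u\<in>idx n. if u = v then k z * taft_sc n q u z p else 0)"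
    by (rule sum.swap)
  finally show ?thesis
    using assms by (simp add: sum.delta)
qed

locale taft_linear_map =
  fixes n :: nat and q :: "'k::field" and scale :: "'k \<Rightarrow> 'a::ring_1 \<Rightarrow> 'a"
    and act :: "nat \<Rightarrow> nat \<Rightarrow> 'a \<Rightarrow> 'a"
  assumes two_le_n: "2 \<le> n" and prim_root: "prim_root n q" and k_algebra: "k_algebra scale"
    and linear_act: "\<And>i j. Vector_Spaces.linear scale scale (act i j)"
begin

sublocale vs: vector_space scale
  using k_algebra by (simp add: k_algebra_def)

lemma scale_mult_left [simp]: "scale c x * z = scale c (x * z)"
  using k_algebra by (simp add: k_algebra_def)

lemma scale_mult_right [simp]: "x * scale c z = scale c (x * z)"
  using k_algebra by (simp add: k_algebra_def)

lemma module_hom_act: "module_hom scale scale (act i j)"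
  using linear_act by (simp add: module_hom_iff_linear)

lemma act_scale [simp]: "act i j (scale c x) = scale c (act i j x)"
  by (rule module_hom.scale [OF module_hom_act])

lemma act_zero [simp]: "act i j 0 = 0"
  by (rule module_hom.zero [OF module_hom_act])

lemma act_sum: "act i j (sum f A) = (\<Sum>x\<in>A. act i j (f x))"
  by (rule module_hom.sum [OF module_hom_act])

lemma q_nonzero: "q \<noteq> 0"
  using prim_root two_le_n by (simp add: prim_root_nonzero)

lemma q_power_mod: "q ^ k = q ^ (k mod n)"
  using prim_root by (rule prim_root_power_mod)

lemma act_lin_taft_basis:
  assumes "i < n" "j < n"
  shows "act_lin scale act n (taft_basis n i j) a = act i j a"
proof -
  have "scale (if p = (i, j) then 1 else 0) (act (fst p) (snd p) a) = (if p = (i, j) then act i j a else 0)"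
    for p
    by simp
  then show ?thesis
    using assms by (simp add: act_lin_def taft_basis_eq idx_def sum.delta)
qed

lemma sum_taft_comult_basis:
  assumes "i < n" "j < n"
  shows "(\<Sum>u\<in>idx n. \<Sum>v\<in>idx n. scale (taft_comult_basis n q i j (u, v)) (X u v)) =
    (\<Sum>l\<le>j. scale (qbinom q j l) (X ((i + l) mod n, j - l) (i, l)))"
proof -
  have "scale (taft_comult_basis n q i j (u, v)) (X u v) = (\<Sum>l\<le>j.
      if v = (i, l) then if u = ((i + l) mod n, j - l) then scale (qbinom q j l) (X u v) else 0 else 0)"
    for u v
    using assms two_le_n
    by (auto simp: taft_comult_basis_eq tt_basis_def vs.scale_sum_left intro!: sum.cong)
  then have "(\<Sum>u\<in>idx n. \<Sum>v\<in>idx n. scale (taft_comult_basis n q i j (u, v)) (X u v)) =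
      (\<Sum>l\<le>j. \<Sum>u\<in>idx n. \<Sum>v\<in>idx n.
        if v = (i, l) then if u = ((i + l) mod n, j - l) then scale (qbinom q j l) (X u v) else 0 else 0)"
    by (simp only: sum.swap [of _ "idx n" "{..j}"])
  also have "\<dots> = (\<Sum>l\<le>j. scale (qbinom q j l) (X ((i + l) mod n, j - l) (i, l)))"
    using assms two_le_n by (intro sum.cong refl) (simp add: sum.delta idx_def less_imp_diff_less)
  finally show ?thesis .
qed

text \<open>act_prod (i, l) (k, m) a = (g^i x^l)(g^k x^m) . a, using x g = q g x.\<close>

definition act_prod :: "nat \<times> nat \<Rightarrow> nat \<times> nat \<Rightarrow> 'a \<Rightarrow> 'a" where
  "act_prod v z a = (if snd v + snd z < n
     then scale (q ^ (snd v * fst z)) (act ((fst v + fst z) mod n) (snd v + snd z) a) else 0)"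

definition basis_unit_axiom :: bool where
  "basis_unit_axiom \<longleftrightarrow> (\<forall>a. act 0 0 a = a)"

definition basis_mult_axiom :: bool where
  "basis_mult_axiom \<longleftrightarrow> (\<forall>i j a b. i < n \<longrightarrow> j < n \<longrightarrow>
     act i j (a * b) = (\<Sum>l\<le>j. scale (qbinom q j l) (act ((i + l) mod n) (j - l) a * act i l b)))"

definition basis_comp_axiom :: bool where
  "basis_comp_axiom \<longleftrightarrow> (\<forall>i j k m a. i < n \<longrightarrow> j < n \<longrightarrow> k < n \<longrightarrow> m < n \<longrightarrow>
     act i j (act k m a) =
       (\<Sum>l\<le>j. scale (qbinom q j l) (act ((i + l) mod n) (j - l) 1 * act_prod (i, l) (k, m) a)))"

lemma act_lin_taft_mul_basis_left:
  assumes "v \<in> idx n"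
  shows "act_lin scale act n (taft_mul n q (taft_basis n (fst v) (snd v)) k) a =
    (\<Sum>z\<in>idx n. scale (k z) (act_prod v z a))"
proof -
  have act_prod_eq: "(\<Sum>p\<in>idx n. scale (taft_sc n q v z p) (act (fst p) (snd p) a)) = act_prod v z a"
    for z
  proof -
    have "scale (taft_sc n q v z p) (act (fst p) (snd p) a) =
        (if p = ((fst v + fst z) mod n, snd v + snd z) then act_prod v z a else 0)" for p
      by (auto simp: taft_sc_def act_prod_def)
    then show ?thesis
      using two_le_n by (simp add: sum.delta idx_def act_prod_def)
  qed
  have "act_lin scale act n (taft_mul n q (taft_basis n (fst v) (snd v)) k) a =
      (\<Sum>p\<in>idx n. \<Sum>z\<in>idx n. scale (k z) (scale (taft_sc n q v z p) (act (fst p) (snd p) a)))"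
    unfolding act_lin_def taft_mul_taft_basis_left [OF assms] by (simp add: vs.scale_sum_left)
  also have "\<dots> = (\<Sum>z\<in>idx n. \<Sum>p\<in>idx n. scale (k z) (scale (taft_sc n q v z p) (act (fst p) (snd p) a)))"
    by (rule sum.swap)
  finally show ?thesis
    by (simp only: act_prod_eq [symmetric] vs.scale_sum_right)
qed

lemma act_lin_comult_extension:
  assumes "\<And>w. w \<in> idx n \<Longrightarrow> act (fst w) (snd w) x =
    (\<Sum>u\<in>idx n. \<Sum>v\<in>idx n. scale (taft_comult_basis n q (fst w) (snd w) (u, v)) (Y u v))"
  shows "act_lin scale act n h x = (\<Sum>u\<in>idx n. \<Sum>v\<in>idx n. scale (taft_comult n q h (u, v)) (Y u v))"
proof -
  have "act_lin scale act n h x = (\<Sum>w\<in>idx n. \<Sum>u\<in>idx n. \<Sum>v\<in>idx n.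
      scale (h w * taft_comult_basis n q (fst w) (snd w) (u, v)) (Y u v))"
    unfolding act_lin_def using assms by (simp add: vs.scale_sum_right)
  also have "\<dots> = (\<Sum>u\<in>idx n. \<Sum>v\<in>idx n. \<Sum>w\<in>idx n.
      scale (h w * taft_comult_basis n q (fst w) (snd w) (u, v)) (Y u v))"
    by (rule sum_sum_sum_swap)
  finally show ?thesis
    by (simp add: taft_comult_def vs.scale_sum_left)
qed

lemma act_lin_taft_mul_taft_basis:
  assumes "v \<in> idx n" "k < n" "m < n"
  shows "act_lin scale act n (taft_mul n q (taft_basis n (fst v) (snd v)) (taft_basis n k m)) a =
    act_prod v (k, m) a"
proof -
  have "scale (taft_basis n k m z) (act_prod v z a) = (if z = (k, m) then act_prod v z a else 0)" for z
    using assms by (simp add: taft_basis_eq)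
  then show ?thesis
    using assms by (simp add: act_lin_taft_mul_basis_left sum.delta idx_def)
qed

lemma basis_comp_axiom_extends:
  assumes comp: basis_comp_axiom and "w \<in> idx n"
  shows "act (fst w) (snd w) (act_lin scale act n k a) = (\<Sum>u\<in>idx n. \<Sum>v\<in>idx n.
    scale (taft_comult_basis n q (fst w) (snd w) (u, v))
      (act (fst u) (snd u) 1 * act_lin scale act n (taft_mul n q (taft_basis n (fst v) (snd v)) k) a))"
proof -
  have "act (fst w) (snd w) (act (fst z) (snd z) a) = (\<Sum>u\<in>idx n. \<Sum>v\<in>idx n.
      scale (taft_comult_basis n q (fst w) (snd w) (u, v)) (act (fst u) (snd u) 1 * act_prod v z a))"
    if "z \<in> idx n" for z
    using comp assms(2) that by (simp add: sum_taft_comult_basis basis_comp_axiom_def mem_idx_iff)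
  then have "act (fst w) (snd w) (act_lin scale act n k a) = (\<Sum>z\<in>idx n. \<Sum>u\<in>idx n. \<Sum>v\<in>idx n.
      scale (taft_comult_basis n q (fst w) (snd w) (u, v)) (act (fst u) (snd u) 1 * scale (k z) (act_prod v z a)))"
    unfolding act_lin_def act_sum
    by (intro sum.cong refl) (simp add: vs.scale_sum_right mult.commute)
  also have "\<dots> = (\<Sum>u\<in>idx n. \<Sum>v\<in>idx n. \<Sum>z\<in>idx n.
      scale (taft_comult_basis n q (fst w) (snd w) (u, v)) (act (fst u) (snd u) 1 * scale (k z) (act_prod v z a)))"
    by (rule sum_sum_sum_swap)
  finally show ?thesis
    by (simp add: act_lin_taft_mul_basis_left sum_distrib_left vs.scale_sum_right)
qed

lemma partial_action_iff_basis_axioms: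
  "partial_action n q scale act \<longleftrightarrow> basis_unit_axiom \<and> basis_mult_axiom \<and> basis_comp_axiom"
proof
  assume pa: "partial_action n q scale act"
  note pa_mult = pa [unfolded partial_action_def, THEN conjunct2, THEN conjunct1, rule_format]
  note pa_comp = pa [unfolded partial_action_def, THEN conjunct2, THEN conjunct2, rule_format]
  have "act 0 0 a = a" for a
    using pa two_le_n act_lin_taft_basis [of 0 0 a] by (simp add: partial_action_def)
  moreover have "act i j (a * b) =
      (\<Sum>l\<le>j. scale (qbinom q j l) (act ((i + l) mod n) (j - l) a * act i l b))"
    if "i < n" "j < n" for i j a b
    using pa_mult [OF taft_elem_taft_basis [OF \<open>i < n\<close>, of j]] that
    by (simp add: act_lin_taft_basis taft_comult_taft_basis sum_taft_comult_basis)
  moreover have "act i j (act k m a) =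
      (\<Sum>l\<le>j. scale (qbinom q j l) (act ((i + l) mod n) (j - l) 1 * act_prod (i, l) (k, m) a))"
    if "i < n" "j < n" "k < n" "m < n" for i j k m a
    using pa_comp [OF taft_elem_taft_basis [OF \<open>i < n\<close>, of j] taft_elem_taft_basis [OF \<open>k < n\<close>, of m]]
      that
    by (simp add: act_lin_taft_basis taft_comult_taft_basis sum_taft_comult_basis
        act_lin_taft_mul_taft_basis mem_idx_iff)
  ultimately show "basis_unit_axiom \<and> basis_mult_axiom \<and> basis_comp_axiom"
    by (simp add: basis_unit_axiom_def basis_mult_axiom_def basis_comp_axiom_def)
next
  assume axioms: "basis_unit_axiom \<and> basis_mult_axiom \<and> basis_comp_axiom"
  have "act_lin scale act n (taft_basis n 0 0) a = a" for a
    using axioms two_le_n by (simp add: act_lin_taft_basis basis_unit_axiom_def)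
  moreover have "act_lin scale act n h (a * b) = (\<Sum>u\<in>idx n. \<Sum>v\<in>idx n.
      scale (taft_comult n q h (u, v)) (act (fst u) (snd u) a * act (fst v) (snd v) b))" for h a b
    using axioms by (intro act_lin_comult_extension)
      (simp add: sum_taft_comult_basis basis_mult_axiom_def mem_idx_iff)
  moreover have "act_lin scale act n h (act_lin scale act n k a) = (\<Sum>u\<in>idx n. \<Sum>v\<in>idx n.
      scale (taft_comult n q h (u, v))
        (act (fst u) (snd u) 1 * act_lin scale act n (taft_mul n q (taft_basis n (fst v) (snd v)) k) a))"
    for h k a
    using axioms by (intro act_lin_comult_extension basis_comp_axiom_extends) simp_all
  ultimately show "partial_action n q scale act"
    by (simp add: partial_action_def)
qed

section \<open>The recursion for g^b x^m acting on A\<close>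

definition x1 :: 'a where
  "x1 = act 0 1 1"

definition gx_act :: "nat \<Rightarrow> nat \<Rightarrow> 'a \<Rightarrow> 'a" where
  "gx_act b m a = (if m < n then act (b mod n) m a else 0)"

definition neg_mod :: "nat \<Rightarrow> nat" where
  "neg_mod b = (n - b mod n) mod n"

definition closed_coeff :: "nat \<Rightarrow> nat \<Rightarrow> 'k" where
  "closed_coeff r m = (-1) ^ r * q ^ (r * (r + 1) div 2) * qbinom q m r"

text \<open>The right-hand side of the formula for g^b = g^(n - i), where i = neg_mod b.\<close>

definition closed_form :: "nat \<Rightarrow> nat \<Rightarrow> 'a \<Rightarrow> 'a" where
  "closed_form b m a = (if m < n
     then scale (closed_coeff (neg_mod b) m) (x1 ^ (m - neg_mod b) * a * x1 ^ neg_mod b) else 0)"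

definition recursive :: "(nat \<Rightarrow> nat \<Rightarrow> 'a) \<Rightarrow> bool" where
  "recursive E \<longleftrightarrow> (\<forall>b m. scale (q ^ b) (E b (Suc m)) = x1 * E b m - E (Suc b) m * x1)"

lemma closed_coeff_0 [simp]: "closed_coeff 0 m = 1"
  by (simp add: closed_coeff_def)

lemma closed_coeff_eq_0_if_less: "m < r \<Longrightarrow> closed_coeff r m = 0"
  by (simp add: closed_coeff_def qbinom_eq_0_if_less)

lemma closed_coeff_Suc_Suc:
  "closed_coeff (Suc s) (Suc m) = q ^ Suc s * (closed_coeff (Suc s) m - closed_coeff s m)"
  unfolding closed_coeff_def qbinom_Suc_Suc triangle_Suc power_add
  by (simp add: algebra_simps)

lemma closed_coeff_top: "closed_coeff (n - 1) (n - 1) = 1"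
  using prim_root_sign_triangle [OF prim_root two_le_n] by (simp add: closed_coeff_def)

lemma closed_coeff_Suc_top:
  assumes "Suc s < n"
  shows "closed_coeff (Suc s) (n - 1) = closed_coeff s (n - 1)"
proof -
  have "closed_coeff (Suc s) n = 0"
    using qbinom_prim_root_eq_0 [OF prim_root, of "Suc s"] assms by (simp add: closed_coeff_def)
  then show ?thesis
    using closed_coeff_Suc_Suc [of s "n - 1"] two_le_n q_nonzero by simp
qed

lemma neg_mod_less: "neg_mod b < n"
  using two_le_n by (simp add: neg_mod_def)

lemma add_neg_mod_mod: "(b + neg_mod b) mod n = 0"
proof (cases "b mod n = 0")
  case True
  then show ?thesis by (simp add: neg_mod_def)
next
  case False
  then have "neg_mod b = n - b mod n"
    using two_le_n by (simp add: neg_mod_def)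
  then have "(b + neg_mod b) mod n = (b mod n + (n - b mod n)) mod n"
    by (simp add: mod_add_left_eq)
  also have "\<dots> = 0"
    using two_le_n by (simp add: less_imp_le)
  finally show ?thesis .
qed

lemma q_power_add_neg_mod: "q ^ b * q ^ neg_mod b = 1"
  using q_power_mod [of "b + neg_mod b"] add_neg_mod_mod by (simp add: power_add)

lemma neg_mod_eq_0: "b mod n = 0 \<Longrightarrow> neg_mod b = 0"
  by (simp add: neg_mod_def)

lemma neg_mod_Suc_eq_top: "b mod n = 0 \<Longrightarrow> neg_mod (Suc b) = n - 1"
  using two_le_n by (simp add: neg_mod_def mod_Suc)

lemma neg_mod_eq_Suc: "b mod n \<noteq> 0 \<Longrightarrow> neg_mod b = Suc (neg_mod (Suc b))"
  using two_le_n mod_less_divisor [of n b] by (auto simp: neg_mod_def mod_Suc Suc_diff_Suc)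

lemma neg_mod_diff: "i < n \<Longrightarrow> neg_mod ((n - i) mod n) = i"
  by (cases "i = 0") (auto simp: neg_mod_def)

lemma diff_neg_mod_mod: "(n - neg_mod b) mod n = b mod n"
  using two_le_n by (cases "b mod n = 0") (auto simp: neg_mod_def)

lemma closed_form_0: "closed_form b 0 a = (if b mod n = 0 then a else 0)"
  using two_le_n by (auto simp: closed_form_def neg_mod_eq_0 neg_mod_eq_Suc closed_coeff_eq_0_if_less)

lemma closed_form_recursion_mod_0:
  assumes "b mod n = 0" "m < n" "Suc m \<noteq> n \<or> x1 ^ n * a = a * x1 ^ n"
  shows "scale (q ^ b) (closed_form b (Suc m) a) = x1 * closed_form b m a - closed_form (Suc b) m a * x1"
proof -
  have neg_mod: "neg_mod b = 0" "neg_mod (Suc b) = n - 1"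
    using assms(1) by (simp_all add: neg_mod_eq_0 neg_mod_Suc_eq_top)
  have "q ^ b = 1"
    using q_power_mod [of b] assms(1) by simp
  have closed_form_b: "closed_form b k a = x1 ^ k * a" if "k < n" for k
    using that neg_mod by (simp add: closed_form_def)
  show ?thesis
  proof (cases "Suc m < n")
    case True
    then have "closed_form (Suc b) m a = 0"
      using neg_mod by (simp add: closed_form_def closed_coeff_eq_0_if_less)
    then show ?thesis
      using True \<open>q ^ b = 1\<close> by (simp add: closed_form_b mult.assoc)
  next
    case False
    then have "Suc m = n" "m = n - 1"
      using assms(2) by simp_all
    then have "closed_form (Suc b) m a = a * x1 ^ m"
      using neg_mod closed_coeff_top by (simp add: closed_form_def)
    moreover have "closed_form b (Suc m) a = 0"
      using \<open>Suc m = n\<close> by (simp add: closed_form_def)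
    moreover have "x1 * (x1 ^ m * a) = x1 ^ n * a" "a * x1 ^ m * x1 = a * x1 ^ n"
      using \<open>Suc m = n\<close> by (simp_all add: mult.assoc flip: mult.assoc [of x1] power_Suc power_Suc2)
    ultimately show ?thesis
      using assms(2,3) \<open>Suc m = n\<close> by (simp add: closed_form_b)
  qed
qed

lemma closed_form_recursion_mod_not_0:
  assumes "b mod n \<noteq> 0" "m < n"
  shows "scale (q ^ b) (closed_form b (Suc m) a) = x1 * closed_form b m a - closed_form (Suc b) m a * x1"
proof -
  define s where "s = neg_mod (Suc b)"
  have neg_mod: "neg_mod b = Suc s"
    using assms(1) by (simp add: s_def neg_mod_eq_Suc)
  define M where "M = x1 ^ (m - s) * a * x1 ^ Suc s"
  have right: "closed_form (Suc b) m a * x1 = scale (closed_coeff s m) M"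
    using assms(2) by (simp add: closed_form_def M_def mult.assoc s_def flip: power_Suc2)
  have left: "x1 * closed_form b m a = scale (closed_coeff (Suc s) m) M"
  proof (cases "Suc s \<le> m")
    case True
    then have "x1 * x1 ^ (m - Suc s) = x1 ^ (m - s)"
      by (metis Suc_diff_le diff_Suc_Suc power_Suc)
    then show ?thesis
      using assms(2) neg_mod by (simp add: closed_form_def M_def flip: mult.assoc)
  next
    case False
    then show ?thesis
      using assms(2) neg_mod by (simp add: closed_form_def closed_coeff_eq_0_if_less)
  qed
  have "q ^ b * closed_coeff (Suc s) (Suc m) = closed_coeff (Suc s) m - closed_coeff s m"
    using q_power_add_neg_mod [of b] neg_mod by (simp add: closed_coeff_Suc_Suc flip: mult.assoc)
  moreover have "closed_coeff (Suc s) m = closed_coeff s m" if "Suc m = n"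
  proof -
    have "m = n - 1"
      using that by simp
    then show ?thesis
      using closed_coeff_Suc_top [of s] neg_mod_less [of b] neg_mod by simp
  qed
  ultimately show ?thesis
    unfolding left right using assms(2)
    by (cases "Suc m < n") (auto simp: closed_form_def M_def neg_mod vs.scale_left_diff_distrib)
qed

lemma closed_form_recursion:
  assumes "Suc m \<noteq> n \<or> x1 ^ n * a = a * x1 ^ n"
  shows "scale (q ^ b) (closed_form b (Suc m) a) = x1 * closed_form b m a - closed_form (Suc b) m a * x1"
proof (cases "m < n")
  case False
  then show ?thesis by (simp add: closed_form_def)
next
  case True
  then show ?thesis
    using assms closed_form_recursion_mod_0 closed_form_recursion_mod_not_0 by blast
qed

lemma central_if_closed_form_top_commutes:
  assumes "x1 * closed_form 0 (n - 1) a = closed_form 1 (n - 1) a * x1"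
  shows "x1 ^ n * a = a * x1 ^ n"
proof -
  have "closed_form 0 (n - 1) a = x1 ^ (n - 1) * a"
    using two_le_n by (simp add: closed_form_def neg_mod_eq_0)
  moreover have "closed_form 1 (n - 1) a = a * x1 ^ (n - 1)"
    using two_le_n neg_mod_Suc_eq_top [of 0] closed_coeff_top by (simp add: closed_form_def)
  ultimately have "x1 * (x1 ^ (n - 1) * a) = a * x1 ^ (n - 1) * x1"
    using assms by simp
  moreover have "x1 ^ (n - 1) * x1 = x1 ^ n"
    using power_minus_mult [of n x1] two_le_n by simp
  ultimately show ?thesis
    by (metis mult.assoc power_commutes)
qed

lemma recursion_unique:
  assumes "\<And>b. E b 0 = E' b 0"
    and "\<And>b m. Suc m < n \<Longrightarrow> scale (q ^ b) (E b (Suc m)) = x1 * E b m - E (Suc b) m * x1"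
    and "\<And>b m. Suc m < n \<Longrightarrow> scale (q ^ b) (E' b (Suc m)) = x1 * E' b m - E' (Suc b) m * x1"
    and "m < n"
  shows "E b m = E' b m"
  using assms(4)
proof (induction m arbitrary: b)
  case 0
  then show ?case
    using assms(1) by simp
next
  case (Suc m)
  then have "scale (q ^ b) (E b (Suc m)) = scale (q ^ b) (E' b (Suc m))"
    using assms(2,3) by simp
  then show ?case
    using q_nonzero by simp
qed

lemma scale_sum_qbinom_Suc_commutator:
  assumes "\<And>l. l \<le> j \<Longrightarrow>
    scale (q ^ i) (F (Suc l)) + scale (q ^ i * q ^ l) (F l) = c * G l - H l * c"
  shows "scale (q ^ i) (\<Sum>l\<le>Suc j. scale (qbinom q (Suc j) l) (F l)) =
    c * (\<Sum>l\<le>j. scale (qbinom q j l) (G l)) - (\<Sum>l\<le>j. scale (qbinom q j l) (H l)) * c"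
proof -
  have "scale (q ^ i) (\<Sum>l\<le>Suc j. scale (qbinom q (Suc j) l) (F l)) =
      (\<Sum>l\<le>j. scale (qbinom q j l) (scale (q ^ i) (F (Suc l)) + scale (q ^ i * q ^ l) (F l)))"
    by (simp only: vs.sum_qbinom_Suc)
      (simp add: vs.scale_right_distrib vs.scale_sum_right sum.distrib algebra_simps)
  also have "\<dots> = (\<Sum>l\<le>j. c * scale (qbinom q j l) (G l) - scale (qbinom q j l) (H l) * c)"
    using assms by (intro sum.cong refl) (simp add: vs.scale_right_diff_distrib)
  finally show ?thesis
    by (simp add: sum_subtractf sum_distrib_left sum_distrib_right)
qed

lemma recursive_qbinom_product:
  assumes "recursive A" "recursive B"
  shows "recursive (\<lambda>i j. \<Sum>l\<le>j. scale (qbinom q j l) (A (i + l) (j - l) * B i l))"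
proof -
  have rec: "scale (q ^ b) (A b (Suc m)) = x1 * A b m - A (Suc b) m * x1"
    "scale (q ^ b) (B b (Suc m)) = x1 * B b m - B (Suc b) m * x1" for b m
    using assms by (simp_all add: recursive_def)
  have "scale (q ^ i) (\<Sum>l\<le>Suc j. scale (qbinom q (Suc j) l) (A (i + l) (Suc j - l) * B i l)) =
      x1 * (\<Sum>l\<le>j. scale (qbinom q j l) (A (i + l) (j - l) * B i l))
      - (\<Sum>l\<le>j. scale (qbinom q j l) (A (Suc i + l) (j - l) * B (Suc i) l)) * x1" for i j
  proof (rule scale_sum_qbinom_Suc_commutator)
    fix l
    assume "l \<le> j"
    then have "Suc j - l = Suc (j - l)"
      by simp
    then have "scale (q ^ i * q ^ l) (A (i + l) (Suc j - l) * B i l) =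
        scale (q ^ (i + l)) (A (i + l) (Suc (j - l))) * B i l"
      by (simp add: power_add)
    moreover have "scale (q ^ i) (A (i + Suc l) (Suc j - Suc l) * B i (Suc l)) =
        A (Suc i + l) (j - l) * scale (q ^ i) (B i (Suc l))"
      by simp
    ultimately show "scale (q ^ i) (A (i + Suc l) (Suc j - Suc l) * B i (Suc l))
        + scale (q ^ i * q ^ l) (A (i + l) (Suc j - l) * B i l)
        = x1 * (A (i + l) (j - l) * B i l) - A (Suc i + l) (j - l) * B (Suc i) l * x1"
      by (simp only: rec) (simp add: algebra_simps)
  qed
  then show ?thesis
    by (simp add: recursive_def)
qed

lemma gx_act_eq_0 [simp]: "n \<le> m \<Longrightarrow> gx_act b m a = 0"
  by (simp add: gx_act_def)

lemma gx_act_mod: "b mod n = b' mod n \<Longrightarrow> gx_act b m a = gx_act b' m a"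
  by (simp add: gx_act_def)

lemma recursive_gx_act_shift:
  assumes "recursive (\<lambda>b m. gx_act b m a)"
  shows "recursive (\<lambda>i l. scale (q ^ (l * k)) (gx_act (i + k) (l + m) a))"
  unfolding recursive_def
proof (intro allI)
  fix i l
  have "scale (q ^ i) (scale (q ^ (Suc l * k)) (gx_act (i + k) (Suc l + m) a)) =
      scale (q ^ (l * k)) (scale (q ^ (i + k)) (gx_act (i + k) (Suc (l + m)) a))"
    by (simp add: power_add algebra_simps)
  also have "\<dots> = scale (q ^ (l * k)) (x1 * gx_act (i + k) (l + m) a - gx_act (Suc i + k) (l + m) a * x1)"
    using assms by (simp add: recursive_def)
  finally show "scale (q ^ i) (scale (q ^ (Suc l * k)) (gx_act (i + k) (Suc l + m) a)) =
      x1 * scale (q ^ (l * k)) (gx_act (i + k) (l + m) a)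
      - scale (q ^ (l * k)) (gx_act (Suc i + k) (l + m) a) * x1"
    by (simp add: vs.scale_right_diff_distrib)
qed

lemma gx_act_less: "m < n \<Longrightarrow> gx_act b m a = act (b mod n) m a"
  by (simp add: gx_act_def)

lemma act_prod_eq_gx_act: "act_prod (i, l) (k, m) a = scale (q ^ (l * k)) (gx_act (i + k) (l + m) a)"
  by (simp add: act_prod_def gx_act_def)

context
  assumes gx_act_0: "\<And>b a. gx_act b 0 a = (if b mod n = 0 then a else 0)"
    and recursive_gx_act: "\<And>a. recursive (\<lambda>b m. gx_act b m a)"
begin

lemma gx_act_mult:
  assumes "j < n"
  shows "gx_act i j (a * b) = (\<Sum>l\<le>j. scale (qbinom q j l) (gx_act (i + l) (j - l) a * gx_act i l b))"
proof (rule recursion_unique [where E = "\<lambda>i j. gx_act i j (a * b)" and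
    E' = "\<lambda>i j. \<Sum>l\<le>j. scale (qbinom q j l) (gx_act (i + l) (j - l) a * gx_act i l b)"])
  show "gx_act i 0 (a * b) = (\<Sum>l\<le>0. scale (qbinom q 0 l) (gx_act (i + l) (0 - l) a * gx_act i l b))" for i
    by (simp add: gx_act_0)
qed (use recursive_gx_act recursive_qbinom_product [OF recursive_gx_act recursive_gx_act] assms
    in \<open>simp_all add: recursive_def\<close>)

lemma gx_act_comp:
  assumes "j < n"
  shows "gx_act i j (gx_act k m a) = (\<Sum>l\<le>j. scale (qbinom q j l)
    (gx_act (i + l) (j - l) 1 * scale (q ^ (l * k)) (gx_act (i + k) (l + m) a)))"
proof (rule recursion_unique [where E = "\<lambda>i j. gx_act i j (gx_act k m a)" and
    E' = "\<lambda>i j. \<Sum>l\<le>j. scale (qbinom q j l)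
      (gx_act (i + l) (j - l) 1 * scale (q ^ (l * k)) (gx_act (i + k) (l + m) a))"])
  have "gx_act (i + k) m a = gx_act k m a" if "i mod n = 0" for i
    using that by (intro gx_act_mod) (simp add: mod_add_left_eq [symmetric])
  then show "gx_act i 0 (gx_act k m a) = (\<Sum>l\<le>0. scale (qbinom q 0 l)
      (gx_act (i + l) (0 - l) 1 * scale (q ^ (l * k)) (gx_act (i + k) (l + m) a)))" for i
    by (simp add: gx_act_0)
qed (use recursive_gx_act assms
    recursive_qbinom_product [OF recursive_gx_act recursive_gx_act_shift [OF recursive_gx_act]]
    in \<open>simp_all add: recursive_def\<close>)

lemma basis_axioms_if_recursive: "basis_unit_axiom \<and> basis_mult_axiom \<and> basis_comp_axiom"
proof -
  have "act 0 0 a = a" for a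
    using gx_act_0 [of 0 a] two_le_n by (simp add: gx_act_def)
  moreover have "act i j (a * b) =
      (\<Sum>l\<le>j. scale (qbinom q j l) (act ((i + l) mod n) (j - l) a * act i l b))"
    if "i < n" "j < n" for i j a b
    using gx_act_mult [OF \<open>j < n\<close>, of i a b] that by (simp add: gx_act_less less_imp_diff_less)
  moreover have "act i j (act k m a) =
      (\<Sum>l\<le>j. scale (qbinom q j l) (act ((i + l) mod n) (j - l) 1 * act_prod (i, l) (k, m) a))"
    if "i < n" "j < n" "k < n" "m < n" for i j k m a
    using gx_act_comp [OF \<open>j < n\<close>, of i k m a] that
    by (simp add: gx_act_less act_prod_eq_gx_act less_imp_diff_less)
  ultimately show ?thesis
    by (simp add: basis_unit_axiom_def basis_mult_axiom_def basis_comp_axiom_def)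
qed

end

lemma partial_action_if_closed_form:
  assumes central: "\<And>a. x1 ^ n * a = a * x1 ^ n"
    and closed_form: "\<And>b m a. m < n \<Longrightarrow> gx_act b m a = closed_form b m a"
  shows "partial_action n q scale act"
proof -
  have gx_act_eq: "gx_act b m a = closed_form b m a" for b m a
    using closed_form by (cases "m < n") (simp_all add: closed_form_def)
  have "gx_act b 0 a = (if b mod n = 0 then a else 0)" for b a
    by (simp add: gx_act_eq closed_form_0)
  moreover have "recursive (\<lambda>b m. gx_act b m a)" for a
    using closed_form_recursion central by (simp add: recursive_def gx_act_eq)
  ultimately show ?thesis
    by (simp add: partial_action_iff_basis_axioms basis_axioms_if_recursive)
qed

end

locale normalized_taft_linear_map = taft_linear_map +
  assumes act_one: "act 0 0 1 = 1"
    and act_g_one: "\<And>i. 1 \<le> i \<Longrightarrow> i < n \<Longrightarrow> act i 0 1 = 0"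
begin

lemma gx_act_0_if_basis_axioms:
  assumes basis_unit_axiom basis_comp_axiom
  shows "gx_act b 0 a = (if b mod n = 0 then a else 0)"
proof -
  have idem: "act i 0 a = act i 0 1 * act i 0 a" if "i < n" for i a
    using assms(2) [unfolded basis_comp_axiom_def, rule_format, of i 0 0 0 a] assms(1) that two_le_n
    by (simp add: basis_unit_axiom_def act_prod_def)
  have "act i 0 a = (if i = 0 then a else 0)" if "i < n" for i a
  proof (cases "i = 0")
    case True
    then show ?thesis
      using assms(1) by (simp add: basis_unit_axiom_def)
  next
    case False
    then show ?thesis
      using idem [OF that, of a] act_g_one [of i] that by simp
  qed
  then show ?thesis
    using two_le_n by (simp add: gx_act_def)
qed

lemma act_top_mult_right:
  assumes basis_unit_axiom basis_mult_axiom
  shows "act (n - 1) 1 a = a * act (n - 1) 1 1"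
  using assms(2) [unfolded basis_mult_axiom_def, rule_format, of "n - 1" 1 a 1] assms(1)
    two_le_n act_g_one [of "n - 1"]
  by (simp add: basis_unit_axiom_def atMost_Suc)

lemma act_top_one:
  assumes basis_comp_axiom
  shows "act (n - 1) 1 1 = scale (- q) x1"
proof -
  have "act (n - 1) 1 (act 1 0 1) = act (n - 1) 1 1 + scale q x1"
    using assms [unfolded basis_comp_axiom_def, rule_format, of "n - 1" 1 1 0 1] two_le_n act_one
    by (simp add: atMost_Suc act_prod_def x1_def)
  then show ?thesis
    using act_g_one [of 1] two_le_n by (simp add: eq_neg_iff_add_eq_0)
qed

lemma recursive_gx_act_if_basis_axioms:
  assumes basis_unit_axiom basis_mult_axiom basis_comp_axiom
  shows "recursive (\<lambda>b m. gx_act b m a)"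
  unfolding recursive_def
proof (intro allI)
  fix b m
  show "scale (q ^ b) (gx_act b (Suc m) a) = x1 * gx_act b m a - gx_act (Suc b) m a * x1"
  proof (cases "m < n")
    case False
    then show ?thesis by simp
  next
    case True
    have "(n - 1 + Suc b mod n) mod n = (n - 1 + Suc b) mod n"
      by (simp only: mod_add_right_eq)
    also have "n - 1 + Suc b = b + 1 * n"
      using two_le_n by simp
    finally have "(n - 1 + Suc b mod n) mod n = b mod n"
      by (simp only: mod_mult_self1)
    then have "act (n - 1) 1 (act (Suc b mod n) m a) = scale (- q) x1 * act (b mod n) m a
        + (if Suc m < n then scale (q ^ Suc b) (act (b mod n) (Suc m) a) else 0)"
      using assms(3) [unfolded basis_comp_axiom_def, rule_format, of "n - 1" 1 "Suc b mod n" m a]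
        True two_le_n act_one act_top_one [OF assms(3)] q_power_mod [of "Suc b", symmetric]
      by (simp add: atMost_Suc act_prod_def)
    then have "scale (-q) (gx_act (Suc b) m a * x1) =
        scale (-q) (x1 * gx_act b m a) + scale (q * q ^ b) (gx_act b (Suc m) a)"
      using True act_top_mult_right [OF assms(1,2), of "act (Suc b mod n) m a"] act_top_one [OF assms(3)]
      by (cases "Suc m < n") (auto simp: gx_act_def algebra_simps)
    then have "scale q (scale (q ^ b) (gx_act b (Suc m) a)) =
        scale q (x1 * gx_act b m a - gx_act (Suc b) m a * x1)"
      by (simp add: vs.scale_right_diff_distrib algebra_simps)
    then show ?thesis
      using q_nonzero vs.scale_left_imp_eq by blast
  qed
qed

lemma closed_form_if_partial_action:
  assumes "partial_action n q scale act" "m < n"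
  shows "gx_act b m a = closed_form b m a"
proof (rule recursion_unique [where E = "\<lambda>b m. gx_act b m a" and E' = "\<lambda>b m. closed_form b m a"])
  have axioms: basis_unit_axiom basis_mult_axiom basis_comp_axiom
    using assms(1) by (simp_all add: partial_action_iff_basis_axioms)
  show "gx_act b 0 a = closed_form b 0 a" for b
    using gx_act_0_if_basis_axioms [OF axioms(1,3)] by (simp add: closed_form_0)
  show "scale (q ^ b) (gx_act b (Suc m) a) = x1 * gx_act b m a - gx_act (Suc b) m a * x1" for b m
    using recursive_gx_act_if_basis_axioms [OF axioms] by (simp add: recursive_def)
qed (use closed_form_recursion assms(2) in auto)

lemma central_if_partial_action:
  assumes "partial_action n q scale act"
  shows "x1 ^ n * a = a * x1 ^ n"
proof (rule central_if_closed_form_top_commutes)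
  have "recursive (\<lambda>b m. gx_act b m a)"
    using assms recursive_gx_act_if_basis_axioms by (simp add: partial_action_iff_basis_axioms)
  then have "scale (q ^ 0) (gx_act 0 (Suc (n - 1)) a) = x1 * gx_act 0 (n - 1) a - gx_act 1 (n - 1) a * x1"
    unfolding recursive_def One_nat_def by blast
  moreover have "Suc (n - 1) = n" "n - 1 < n"
    using two_le_n by simp_all
  ultimately show "x1 * closed_form 0 (n - 1) a = closed_form 1 (n - 1) a * x1"
    using closed_form_if_partial_action [OF assms] by simp
qed

lemma partial_action_iff_closed_form:
  "partial_action n q scale act \<longleftrightarrow>
    (\<forall>a. x1 ^ n * a = a * x1 ^ n) \<and> (\<forall>b m a. m < n \<longrightarrow> gx_act b m a = closed_form b m a)"
  using central_if_partial_action closed_form_if_partial_action partial_action_if_closed_form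
  by blast

lemma gx_act_closed_form_iff:
  "(\<forall>b m a. m < n \<longrightarrow> gx_act b m a = closed_form b m a) \<longleftrightarrow>
    (\<forall>a i j. i < n \<longrightarrow> j < n \<longrightarrow>
      act ((n - i) mod n) j a = scale (closed_coeff i j) (x1 ^ (j - i) * a * x1 ^ i))"
proof
  assume closed_form: "\<forall>b m a. m < n \<longrightarrow> gx_act b m a = closed_form b m a"
  show "\<forall>a i j. i < n \<longrightarrow> j < n \<longrightarrow>
      act ((n - i) mod n) j a = scale (closed_coeff i j) (x1 ^ (j - i) * a * x1 ^ i)"
  proof (intro allI impI)
    fix a i j
    assume "i < n" "j < n"
    then show "act ((n - i) mod n) j a = scale (closed_coeff i j) (x1 ^ (j - i) * a * x1 ^ i)"
      using closed_form [rule_format, of j "(n - i) mod n" a] neg_mod_diff [of i]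
      by (simp add: gx_act_def closed_form_def)
  qed
next
  assume formula: "\<forall>a i j. i < n \<longrightarrow> j < n \<longrightarrow>
      act ((n - i) mod n) j a = scale (closed_coeff i j) (x1 ^ (j - i) * a * x1 ^ i)"
  show "\<forall>b m a. m < n \<longrightarrow> gx_act b m a = closed_form b m a"
    using formula [rule_format, OF neg_mod_less] by (simp add: gx_act_def closed_form_def diff_neg_mod_mod)
qed

end

theorem corollary3p11:
  fixes n :: nat and q :: "'k::field"
    and scale :: "'k \<Rightarrow> 'a::ring_1 \<Rightarrow> 'a"
    and act :: "nat \<Rightarrow> nat \<Rightarrow> 'a \<Rightarrow> 'a"
  assumes "n \<ge> 2"
    and "prim_root n q"
    and "k_algebra scale"
    and "\<And>i j. Vector_Spaces.linear scale scale (act i j)"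
    and "act 0 0 1 = 1"
    and "\<And>i. 1 \<le> i \<Longrightarrow> i < n \<Longrightarrow> act i 0 1 = 0"
  shows "partial_action n q scale act \<longleftrightarrow>
    ((act 0 1 1) ^ n \<in> center \<and>
     (\<forall>a i j. i < n \<longrightarrow> j < n \<longrightarrow>
        act ((n - i) mod n) j a =
          scale ((-1) ^ i * q ^ (i * (i + 1) div 2) * qbinom q j i)
            ((act 0 1 1) ^ (j - i) * a * (act 0 1 1) ^ i)))"
proof -
  interpret normalized_taft_linear_map n q scale act
    using assms
    by (simp add: normalized_taft_linear_map_def taft_linear_map_def normalized_taft_linear_map_axioms_def)
  show ?thesis
    unfolding partial_action_iff_closed_form gx_act_closed_form_iff
    by (simp add: center_def x1_def closed_coeff_def)
qed

end
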